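(* In the setting of the context (FSR scheme with direct flux reconstruction), let $\mathcal{E}_j=(\Phi_{j+1/2}-\Phi_{j-1/2})/h$, evaluated on the exact nodal values. If $\kappa_3=0$ and $\theta_3=0$, then as $h\to0$, with all derivatives evaluated at $x_j$, $$\mathcal{E}_j=\frac{\partial f}{\partial x}+\frac{3\theta-1}{12}\frac{\partial^3 f}{\partial x^3}h^2-\frac{\kappa-1}{8}\left[\frac{\partial D}{\partial x}\frac{\partial^3 u}{\partial x^3}+D(u(x_j))\frac{\partial^4 u}{\partial x^4}\right]h^3+\frac{15\theta-13}{240}\frac{\partial^5 f}{\partial x^5}h^4+O(h^5),$$ where $f$ denotes $f(u(x))$ and $\partial D/\partial x=\frac{d}{dx}D(u(x))$. In particular, with $\theta=1/3$ the scheme is third-order accurate.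
   Context: Let $h>0$, uniform grid $x_i=ih$, $i\in\mathbb{Z}$. Let $u$ be a smooth real function of $x$, $u_i=u(x_i)$; let $f$ (flux) and $D$ (dissipation coefficient) be smooth real functions of one variable; $f_i=f(u_i)$. For nodal values $g_i$ define successive central differences $(g_x)_i=(g_{i+1}-g_{i-1})/(2h)$, $(g_{xx})_i=((g_x)_{i+1}-(g_x)_{i-1})/(2h)$, and for the face $i+1/2$ with $j=i$, $k=i+1$, define $T_j[g]=\frac h4((g_x)_k-(g_x)_j)-\frac{h^2}{4}(g_{xx})_j$, $T_k[g]=\frac h4((g_x)_k-(g_x)_j)-\frac{h^2}{4}(g_{xx})_k$. Reconstructed solution states (parameters $\kappa,\kappa_3$): $u_L=\kappa\frac{u_j+u_k}{2}+(1-\kappa)[u_j+\frac h2(u_x)_j]+\kappa_3T_j[u]$, $u_R=\kappa\frac{u_j+u_k}{2}+(1-\kappa)[u_k-\frac h2(u_x)_k]+\kappa_3T_k[u]$. Reconstructed fluxes (parameters $\theta,\theta_3$): $f_L=\theta\frac{f_j+f_k}{2}+(1-\theta)[f_j+\frac h2(f_x)_j]+\theta_3T_j[f]$, $f_R=\theta\frac{f_j+f_k}{2}+(1-\theta)[f_k-\frac h2(f_x)_k]+\theta_3T_k[f]$. Numerical flux: $\Phi_{i+1/2}=\frac12(f_L+f_R)-\frac12D_{i+1/2}(u_R-u_L)$, with $D_{i+1/2}=\bar D(u_i,u_{i+1})$ for a smooth symmetric $\bar D$ with $\bar D(v,v)=D(v)$. *)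

theory Defs
  imports "HOL-Analysis.Analysis" "HOL-Library.Landau_Symbols"
begin

definition smooth1 :: "(real \<Rightarrow> real) \<Rightarrow> bool" where
  "smooth1 g \<longleftrightarrow> (\<forall>n x. (deriv ^^ n) g differentiable (at x))"

definition pd1 :: "(real \<Rightarrow> real \<Rightarrow> real) \<Rightarrow> real \<Rightarrow> real \<Rightarrow> real" where
  "pd1 F = (\<lambda>a b. deriv (\<lambda>s. F s b) a)"
definition pd2 :: "(real \<Rightarrow> real \<Rightarrow> real) \<Rightarrow> real \<Rightarrow> real \<Rightarrow> real" where
  "pd2 F = (\<lambda>a b. deriv (\<lambda>t. F a t) b)"

fun iterpd :: "bool list \<Rightarrow> (real \<Rightarrow> real \<Rightarrow> real) \<Rightarrow> real \<Rightarrow> real \<Rightarrow> real" where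
  "iterpd [] F = F"
| "iterpd (b # bs) F = (if b then pd1 else pd2) (iterpd bs F)"

definition smooth2 :: "(real \<Rightarrow> real \<Rightarrow> real) \<Rightarrow> bool" where
  "smooth2 F \<longleftrightarrow> (\<forall>bs. continuous_on UNIV (\<lambda>p. iterpd bs F (fst p) (snd p)) \<and>
     (\<forall>a b. (\<lambda>s. iterpd bs F s b) differentiable (at a) \<and>
            (\<lambda>t. iterpd bs F a t) differentiable (at b)))"

text \<open>Nodal values are indexed by integers: g i is the value at node i.\<close>
definition cdx :: "real \<Rightarrow> (int \<Rightarrow> real) \<Rightarrow> int \<Rightarrow> real" where
  "cdx h g i = (g (i + 1) - g (i - 1)) / (2 * h)"

definition cdxx :: "real \<Rightarrow> (int \<Rightarrow> real) \<Rightarrow> int \<Rightarrow> real" where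
  "cdxx h g i = (cdx h g (i + 1) - cdx h g (i - 1)) / (2 * h)"

text \<open>Correction terms at face i+1/2 (j = i, k = i+1).\<close>
definition Tj :: "real \<Rightarrow> (int \<Rightarrow> real) \<Rightarrow> int \<Rightarrow> real" where
  "Tj h g i = h / 4 * (cdx h g (i + 1) - cdx h g i) - h^2 / 4 * cdxx h g i"

definition Tk :: "real \<Rightarrow> (int \<Rightarrow> real) \<Rightarrow> int \<Rightarrow> real" where
  "Tk h g i = h / 4 * (cdx h g (i + 1) - cdx h g i) - h^2 / 4 * cdxx h g (i + 1)"

definition recL :: "real \<Rightarrow> real \<Rightarrow> real \<Rightarrow> (int \<Rightarrow> real) \<Rightarrow> int \<Rightarrow> real" where
  "recL k k3 h g i = k * (g i + g (i + 1)) / 2 + (1 - k) * (g i + h / 2 * cdx h g i)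
      + k3 * Tj h g i"

definition recR :: "real \<Rightarrow> real \<Rightarrow> real \<Rightarrow> (int \<Rightarrow> real) \<Rightarrow> int \<Rightarrow> real" where
  "recR k k3 h g i = k * (g i + g (i + 1)) / 2 + (1 - k) * (g (i + 1) - h / 2 * cdx h g (i + 1))
      + k3 * Tk h g i"

text \<open>Numerical flux at face i+1/2, given nodal solution values uv.\<close>
definition numflux :: "real \<Rightarrow> real \<Rightarrow> real \<Rightarrow> real \<Rightarrow> (real \<Rightarrow> real) \<Rightarrow>
    (real \<Rightarrow> real \<Rightarrow> real) \<Rightarrow> real \<Rightarrow> (int \<Rightarrow> real) \<Rightarrow> int \<Rightarrow> real" where
  "numflux k k3 th th3 f Dbar h uv i =
     (recL th th3 h (f \<circ> uv) i + recR th th3 h (f \<circ> uv) i) / 2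
     - Dbar (uv i) (uv (i + 1)) * (recR k k3 h uv i - recL k k3 h uv i) / 2"

text \<open>Truncation error at the node x (= x_j), using exact nodal values u(x + m h)
  at the nodes x_(j+m).\<close>
definition trunc_err :: "real \<Rightarrow> real \<Rightarrow> real \<Rightarrow> real \<Rightarrow> (real \<Rightarrow> real) \<Rightarrow>
    (real \<Rightarrow> real \<Rightarrow> real) \<Rightarrow> (real \<Rightarrow> real) \<Rightarrow> real \<Rightarrow> real \<Rightarrow> real" where
  "trunc_err k k3 th th3 f Dbar u x h =
     (let uv = (\<lambda>m::int. u (x + real_of_int m * h)) in
      (numflux k k3 th th3 f Dbar h uv 0 - numflux k k3 th th3 f Dbar h uv (-1)) / h)"

end

theory Submission
  imports Defs
begin

(* With kappa3 = theta3 = 0 the averaged flux (f_L + f_R)/2 and the jump u_R - u_L at a face are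
   fixed four-point stencils, so h E_j is a linear combination of nodal values. Replacing each nodal
   value by its Taylor polynomial about x_j turns the stencil parts into polynomial identities in h,
   with remainders of order h^6. The jump stencil annihilates quadratics, so u_R - u_L = O(h^3) and
   the dissipation coefficients need only be expanded to second order. By symmetry of Dbar both
   coefficients D_(j+1/2) and D_(j-1/2) are values of the single function psi = Dbar (u x_j) o u at
   x_j + h and x_j - h, and differentiating D v = Dbar v v along the diagonal gives D' = 2 d2 Dbar,
   hence (D o u)' = 2 psi' at x_j. *)

section \<open>Smoothness\<close>

lemma smooth1_higher_deriv_differentiable:
  "smooth1 g \<Longrightarrow> (deriv ^^ n) g field_differentiable at x"
  unfolding smooth1_def by (metis DERIV_deriv_iff_real_differentiable field_differentiable_def)

text \<open>By the chain rule this algebra contains every derivative of \<open>f \<circ> u\<close> and is closed under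
  differentiation; this is what makes \<open>smooth1\<close> closed under composition.\<close>
inductive_set chain_rule_closure :: "(real \<Rightarrow> real) \<Rightarrow> (real \<Rightarrow> real) \<Rightarrow> (real \<Rightarrow> real) set"
  for f u :: "real \<Rightarrow> real" where
  outer: "(deriv ^^ n) f \<circ> u \<in> chain_rule_closure f u"
| inner: "(deriv ^^ n) u \<in> chain_rule_closure f u"
| add: "p \<in> chain_rule_closure f u \<Longrightarrow> q \<in> chain_rule_closure f u \<Longrightarrow>
    (\<lambda>s. p s + q s) \<in> chain_rule_closure f u"
| mult: "p \<in> chain_rule_closure f u \<Longrightarrow> q \<in> chain_rule_closure f u \<Longrightarrow>
    (\<lambda>s. p s * q s) \<in> chain_rule_closure f u"

lemma chain_rule_closure_deriv:
  assumes "smooth1 f" "smooth1 u" "p \<in> chain_rule_closure f u"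
  shows "(\<forall>x. p field_differentiable at x) \<and> deriv p \<in> chain_rule_closure f u"
  using assms(3)
proof induction
  case (outer n)
  have diff: "(deriv ^^ m) f field_differentiable at y" "u field_differentiable at y" for m y
    using smooth1_higher_deriv_differentiable[OF assms(1)]
      smooth1_higher_deriv_differentiable[OF assms(2), of 0] by auto
  have "deriv ((deriv ^^ n) f \<circ> u) = (\<lambda>s. ((deriv ^^ Suc n) f \<circ> u) s * (deriv ^^ 1) u s)"
    using deriv_chain[OF diff(2) diff(1)] by fastforce
  moreover have "(\<lambda>s. ((deriv ^^ Suc n) f \<circ> u) s * (deriv ^^ 1) u s) \<in> chain_rule_closure f u"
    by (intro chain_rule_closure.intros)
  ultimately show ?case
    using field_differentiable_compose[OF diff(2) diff(1)] by metis
next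
  case (inner n)
  then show ?case
    using smooth1_higher_deriv_differentiable[OF assms(2)] chain_rule_closure.inner[of "Suc n"] by auto
next
  case (add p q)
  have "deriv (\<lambda>s. p s + q s) = (\<lambda>s. deriv p s + deriv q s)"
    using add by fastforce
  then show ?case using add by (auto intro!: chain_rule_closure.intros field_differentiable_add)
next
  case (mult p q)
  have "deriv (\<lambda>s. p s * q s) = (\<lambda>s. p s * deriv q s + deriv p s * q s)"
    using mult by fastforce
  then show ?case using mult by (auto intro!: chain_rule_closure.intros field_differentiable_mult)
qed

lemma smooth1_compose:
  assumes "smooth1 f" "smooth1 u"
  shows "smooth1 (f \<circ> u)"
proof -
  have "(deriv ^^ n) (f \<circ> u) \<in> chain_rule_closure f u" for n
  proof (induction n)
    case 0
    show ?case using chain_rule_closure.outer[of 0 f u] by (simp only: funpow_0)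
  qed (use chain_rule_closure_deriv[OF assms] in auto)
  then show ?thesis
    unfolding smooth1_def
    using chain_rule_closure_deriv[OF assms] field_differentiable_imp_differentiable by blast
qed

lemma smooth1_smooth2_slice:
  assumes "smooth2 F"
  shows "smooth1 (F a)"
proof -
  have "(deriv ^^ n) (F a) = iterpd (replicate n False) F a" for n
    by (induction n) (auto simp: pd2_def)
  then show ?thesis
    using assms unfolding smooth1_def smooth2_def by metis
qed

lemma smooth2_has_real_derivative_pd2:
  assumes "smooth2 F"
  shows "(F a has_real_derivative pd2 F a b) (at b)"
proof -
  have "(\<lambda>t. iterpd [] F a t) differentiable (at b)"
    using assms unfolding smooth2_def by blast
  then show ?thesis
    by (simp add: pd2_def DERIV_deriv_iff_real_differentiable)
qed

section \<open>Derivative along the diagonal of a symmetric function\<close>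

lemma has_real_derivative_mean_value:
  assumes "\<And>t. (f has_real_derivative f' t) (at t)"
  shows "\<exists>\<xi>. \<bar>\<xi> - a\<bar> \<le> \<bar>b - a\<bar> \<and> f b - f a = (b - a) * f' \<xi>"
proof (cases a b rule: linorder_cases)
  case less
  then obtain \<xi> where "a < \<xi>" "\<xi> < b" "f b - f a = (b - a) * f' \<xi>"
    using MVT2[of a b f f'] assms by blast
  then show ?thesis by (intro exI[of _ \<xi>]) auto
next
  case greater
  then obtain \<xi> where "b < \<xi>" "\<xi> < a" "f a - f b = (a - b) * f' \<xi>"
    using MVT2[of b a f f'] assms by blast
  then show ?thesis by (intro exI[of _ \<xi>]) (auto simp: algebra_simps)
qed simp

lemma has_real_derivative_symmetric_diagonal:
  fixes F P :: "real \<Rightarrow> real \<Rightarrow> real"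
  assumes deriv2: "\<And>a b. ((\<lambda>t. F a t) has_real_derivative P a b) (at b)"
    and cont: "isCont (\<lambda>z. P (fst z) (snd z)) (v, v)"
    and symm: "\<And>a b. F a b = F b a"
  shows "((\<lambda>s. F s s) has_real_derivative 2 * P v v) (at v)"
proof -
  have "\<exists>\<xi>. \<bar>\<xi> - v\<bar> \<le> \<bar>y - v\<bar> \<and> F a y - F a v = (y - v) * P a \<xi>" for a y
    using has_real_derivative_mean_value[OF deriv2] .
  then have "\<exists>\<xi>. \<forall>a y. \<bar>\<xi> a y - v\<bar> \<le> \<bar>y - v\<bar> \<and> F a y - F a v = (y - v) * P a (\<xi> a y)"
    by (intro choice allI)
  then obtain \<xi> where \<xi>: "\<And>a y. \<bar>\<xi> a y - v\<bar> \<le> \<bar>y - v\<bar>"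
    "\<And>a y. F a y - F a v = (y - v) * P a (\<xi> a y)"
    by blast
  have \<xi>_lim: "((\<lambda>y. \<xi> (a y) y) \<longlongrightarrow> v) (at v)" for a
  proof -
    have "((\<lambda>y. \<xi> (a y) y - v) \<longlongrightarrow> 0) (at v)"
      by (rule Lim_null_comparison[where g = "\<lambda>y. \<bar>y - v\<bar>"])
        (use \<xi>(1) in \<open>auto intro!: tendsto_eq_intros\<close>)
    then show ?thesis by (simp add: LIM_zero_iff)
  qed
  have "((\<lambda>y. (y, \<xi> y y)) \<longlongrightarrow> (v, v)) (at v)" "((\<lambda>y. (v, \<xi> v y)) \<longlongrightarrow> (v, v)) (at v)"
    using \<xi>_lim[of "\<lambda>y. y"] \<xi>_lim[of "\<lambda>_. v"] by (auto intro!: tendsto_Pair)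
  then have "((\<lambda>y. P y (\<xi> y y) + P v (\<xi> v y)) \<longlongrightarrow> P v v + P v v) (at v)"
    using isCont_tendsto_compose[OF cont] by (intro tendsto_add) fastforce+
  moreover have "P y (\<xi> y y) + P v (\<xi> v y) = (F y y - F v v) / (y - v)" if "y \<noteq> v" for y
    using \<xi>(2)[of y y] \<xi>(2)[of v y] symm[of y v] that by (simp add: field_simps)
  then have "\<forall>\<^sub>F y in at v. P y (\<xi> y y) + P v (\<xi> v y) = (F y y - F v v) / (y - v)"
    by (simp add: eventually_at_filter)
  ultimately show ?thesis
    unfolding has_field_derivative_iff by (simp add: Lim_transform_eventually)
qed

lemma smooth2_diagonal_has_real_derivative:
  assumes "smooth2 F" "\<And>a b. F a b = F b a"
  shows "((\<lambda>s. F s s) has_real_derivative 2 * pd2 F v v) (at v)"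
proof -
  have "continuous_on UNIV (\<lambda>z. iterpd [False] F (fst z) (snd z))"
    using assms(1) unfolding smooth2_def by blast
  then have "isCont (\<lambda>z. pd2 F (fst z) (snd z)) (v, v)"
    by (simp add: continuous_on_eq_continuous_at)
  then show ?thesis
    by (rule has_real_derivative_symmetric_diagonal[OF smooth2_has_real_derivative_pd2[OF assms(1)] _ assms(2)])
qed

lemma deriv_compose_symmetric_diagonal:
  assumes "smooth2 Dbar" "\<And>a b. Dbar a b = Dbar b a" "\<And>v. Dbar v v = D v"
    and "(u has_real_derivative u') (at x)"
  shows "deriv (D \<circ> u) x = 2 * deriv (Dbar (u x) \<circ> u) x"
proof -
  have "(D has_real_derivative 2 * pd2 Dbar (u x) (u x)) (at (u x))"
    using smooth2_diagonal_has_real_derivative[OF assms(1,2)] assms(3) by simp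
  then have "deriv (D \<circ> u) x = 2 * pd2 Dbar (u x) (u x) * u'"
    using DERIV_chain[OF _ assms(4)] DERIV_imp_deriv by blast
  moreover have "deriv (Dbar (u x) \<circ> u) x = pd2 Dbar (u x) (u x) * u'"
    using DERIV_chain[OF smooth2_has_real_derivative_pd2[OF assms(1)] assms(4)] DERIV_imp_deriv by blast
  ultimately show ?thesis by simp
qed

section \<open>Taylor expansion and Landau symbols\<close>

definition taylor_poly :: "nat \<Rightarrow> (nat \<Rightarrow> real) \<Rightarrow> real \<Rightarrow> real" where
  "taylor_poly N d t = (\<Sum>m<N. d m / fact m * t ^ m)"

lemma taylor_poly_remainder_bigo:
  assumes "smooth1 g"
  shows "(\<lambda>h. g (x + c * h) - taylor_poly N (\<lambda>m. (deriv ^^ m) g x) (c * h)) \<in> O[at 0](\<lambda>h. h ^ N)"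
proof -
  define d where "d = (deriv ^^ N) g"
  have "isCont d x"
    using assms unfolding smooth1_def d_def by (simp add: differentiable_imp_continuous_within)
  then obtain \<delta> where "\<delta> > 0" and "\<And>y. \<bar>y - x\<bar> < \<delta> \<Longrightarrow> \<bar>d y - d x\<bar> < 1"
    unfolding continuous_at_eps_delta dist_real_def using zero_less_one by blast
  then have d_bound: "\<bar>d y\<bar> \<le> \<bar>d x\<bar> + 1" if "\<bar>y - x\<bar> < \<delta>" for y
    using that by fastforce
  have derivs: "\<forall>m s. ((\<lambda>s. (deriv ^^ m) g (s + x)) has_real_derivative (deriv ^^ Suc m) g (s + x)) (at s)"
    using assms unfolding smooth1_def
    by (simp add: DERIV_deriv_iff_real_differentiable flip: DERIV_shift)
  have remainder: "\<exists>t. \<bar>t\<bar> \<le> \<bar>c * h\<bar> \<and>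
      g (x + c * h) - taylor_poly N (\<lambda>m. (deriv ^^ m) g x) (c * h) = d (t + x) / fact N * (c * h) ^ N"
    for h
    using Maclaurin_all_le[of "\<lambda>m s. (deriv ^^ m) g (s + x)" "\<lambda>s. g (s + x)", OF _ derivs, of "c * h" N]
    by (auto simp: taylor_poly_def d_def add.commute)
  have "((\<lambda>h. c * h) \<longlongrightarrow> 0) (at 0)"
    by (auto intro!: tendsto_eq_intros)
  then have small: "\<forall>\<^sub>F h in at 0. \<bar>c * h\<bar> < \<delta>"
    using \<open>\<delta> > 0\<close> by (auto simp: tendsto_iff dist_real_def)
  show ?thesis
  proof (rule bigoI)
    show "\<forall>\<^sub>F h in at 0. norm (g (x + c * h) - taylor_poly N (\<lambda>m. (deriv ^^ m) g x) (c * h))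
        \<le> (\<bar>d x\<bar> + 1) / fact N * \<bar>c\<bar> ^ N * norm (h ^ N)"
      using small
    proof eventually_elim
      case (elim h)
      then obtain t where "\<bar>t\<bar> < \<delta>" and
        t: "g (x + c * h) - taylor_poly N (\<lambda>m. (deriv ^^ m) g x) (c * h) = d (t + x) / fact N * (c * h) ^ N"
        using remainder[of h] by (meson le_less_trans)
      then have "\<bar>d (t + x)\<bar> \<le> \<bar>d x\<bar> + 1" by (intro d_bound) simp
      then have "\<bar>d (t + x)\<bar> / fact N * \<bar>c * h\<bar> ^ N \<le> (\<bar>d x\<bar> + 1) / fact N * \<bar>c * h\<bar> ^ N"
        by (intro mult_right_mono divide_right_mono) auto
      then show ?case
        unfolding t by (simp add: abs_mult power_mult_distrib power_abs mult.assoc)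
    qed
  qed
qed

lemma taylor_poly_bigo_1: "(\<lambda>h. taylor_poly N d (c * h)) \<in> O[at 0](\<lambda>_. 1)"
proof (rule bigoI_tendsto)
  show "((\<lambda>h. taylor_poly N d (c * h) / 1) \<longlongrightarrow> taylor_poly N d (c * 0)) (at 0)"
    unfolding taylor_poly_def div_by_1 by (intro tendsto_intros)
qed simp

lemma bigo_mult_power:
  fixes f g :: "'a::real_normed_field \<Rightarrow> 'a"
  assumes "f \<in> O[F](\<lambda>x. x ^ m)" "g \<in> O[F](\<lambda>x. x ^ n)"
  shows "(\<lambda>x. f x * g x) \<in> O[F](\<lambda>x. x ^ (m + n))"
  using landau_o.big.mult[OF assms] by (simp add: power_add)

lemma bigo_divide_power:
  fixes f :: "real \<Rightarrow> real"
  assumes "\<forall>\<^sub>F h in F. h \<noteq> 0" "f \<in> O[F](\<lambda>h. h ^ Suc n)"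
  shows "(\<lambda>h. f h / h) \<in> O[F](\<lambda>h. h ^ n)"
proof -
  have "(\<lambda>h. f h / h) \<in> O[F](\<lambda>h. h ^ Suc n / h)"
    by (rule landau_o.big.divide_right[OF assms])
  also have "O[F](\<lambda>h. h ^ Suc n / h) = O[F](\<lambda>h. h ^ n)"
    by (intro landau_o.big.cong eventually_mono[OF assms(1)]) simp
  finally show ?thesis .
qed

section \<open>The scheme without third-order corrections\<close>

text \<open>\<open>(f\<^sub>L + f\<^sub>R) / 2\<close> and \<open>u\<^sub>R - u\<^sub>L\<close> at the face between the nodes of \<open>g0\<close> and \<open>g1\<close>,
  for \<open>\<kappa>\<^sub>3 = \<theta>\<^sub>3 = 0\<close>; \<open>gm\<close> and \<open>g2\<close> are the values at the outer nodes of the stencil.\<close>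
definition face_mean :: "real \<Rightarrow> real \<Rightarrow> real \<Rightarrow> real \<Rightarrow> real \<Rightarrow> real" where
  "face_mean th gm g0 g1 g2 = ((th - 1) * gm + (5 - th) * g0 + (5 - th) * g1 + (th - 1) * g2) / 8"

definition face_jump :: "real \<Rightarrow> real \<Rightarrow> real \<Rightarrow> real \<Rightarrow> real \<Rightarrow> real" where
  "face_jump k gm g0 g1 g2 = (1 - k) * (gm - 3 * g0 + 3 * g1 - g2) / 4"

lemma numflux_uncorrected:
  assumes "h \<noteq> 0"
  shows "numflux k 0 th 0 f Dbar h uv i =
    face_mean th (f (uv (i - 1))) (f (uv i)) (f (uv (i + 1))) (f (uv (i + 2)))
    - Dbar (uv i) (uv (i + 1)) * face_jump k (uv (i - 1)) (uv i) (uv (i + 1)) (uv (i + 2)) / 2"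
  using assms
  by (simp add: numflux_def recL_def recR_def cdx_def face_mean_def face_jump_def field_simps)

lemma trunc_err_uncorrected:
  assumes "h \<noteq> 0"
  shows "trunc_err k 0 th 0 f Dbar u x h =
    (face_mean th (f (u (x - h))) (f (u x)) (f (u (x + h))) (f (u (x + 2 * h)))
     - face_mean th (f (u (x - 2 * h))) (f (u (x - h))) (f (u x)) (f (u (x + h)))
     - (Dbar (u x) (u (x + h)) * face_jump k (u (x - h)) (u x) (u (x + h)) (u (x + 2 * h))
        - Dbar (u (x - h)) (u x) * face_jump k (u (x - 2 * h)) (u (x - h)) (u x) (u (x + h))) / 2) / h"
  using assms by (simp add: trunc_err_def numflux_uncorrected field_simps)

lemma face_mean_diff:
  "face_mean th (a - a') (b - b') (c - c') (d - d') = face_mean th a b c d - face_mean th a' b' c' d'"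
  by (simp add: face_mean_def field_simps)

lemma face_jump_diff:
  "face_jump k (a - a') (b - b') (c - c') (d - d') = face_jump k a b c d - face_jump k a' b' c' d'"
  by (simp add: face_jump_def field_simps)

lemma face_mean_bigo:
  assumes "a \<in> O[F](g)" "b \<in> O[F](g)" "c \<in> O[F](g)" "d \<in> O[F](g)"
  shows "(\<lambda>x. face_mean th (a x) (b x) (c x) (d x)) \<in> O[F](g)"
  unfolding face_mean_def by simp (intro sum_in_bigo; simp add: assms)

lemma face_jump_bigo:
  assumes "a \<in> O[F](g)" "b \<in> O[F](g)" "c \<in> O[F](g)" "d \<in> O[F](g)"
  shows "(\<lambda>x. face_jump k (a x) (b x) (c x) (d x)) \<in> O[F](g)"
  unfolding face_jump_def by simp (intro disjI2 sum_in_bigo; simp add: assms)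

lemma face_mean_taylor_poly:
  "face_mean th (taylor_poly 6 a (- h)) (taylor_poly 6 a 0) (taylor_poly 6 a h) (taylor_poly 6 a (2 * h))
   - face_mean th (taylor_poly 6 a (- 2 * h)) (taylor_poly 6 a (- h)) (taylor_poly 6 a 0) (taylor_poly 6 a h)
   = h * (a 1 + (3 * th - 1) / 12 * a 3 * h ^ 2 + (15 * th - 13) / 240 * a 5 * h ^ 4)"
  unfolding face_mean_def taylor_poly_def by (simp add: eval_nat_numeral fact_numeral field_simps)

lemma face_jump_taylor_poly_quadratic:
  "face_jump k (taylor_poly 3 b ((s - 1) * h)) (taylor_poly 3 b (s * h))
     (taylor_poly 3 b ((s + 1) * h)) (taylor_poly 3 b ((s + 2) * h)) = 0"
  unfolding face_jump_def taylor_poly_def by (simp add: eval_nat_numeral field_simps)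

lemma dissipation_taylor_poly:
  "taylor_poly 3 p h * face_jump k (taylor_poly 6 b (- h)) (taylor_poly 6 b 0) (taylor_poly 6 b h) (taylor_poly 6 b (2 * h))
   - taylor_poly 3 p (- h) * face_jump k (taylor_poly 6 b (- 2 * h)) (taylor_poly 6 b (- h)) (taylor_poly 6 b 0) (taylor_poly 6 b h)
   = (k - 1) / 4 * (2 * p 1 * b 3 + p 0 * b 4) * h ^ 4 + (k - 1) / 8 * (p 2 * b 4 + p 1 * b 5) * h ^ 6"
  unfolding face_jump_def taylor_poly_def by (simp add: eval_nat_numeral fact_numeral field_simps)

lemma face_mean_difference_expansion:
  assumes "smooth1 F"
  shows "(\<lambda>h. face_mean th (F (x - h)) (F x) (F (x + h)) (F (x + 2 * h))
      - face_mean th (F (x - 2 * h)) (F (x - h)) (F x) (F (x + h))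
      - h * (deriv F x + (3 * th - 1) / 12 * (deriv ^^ 3) F x * h ^ 2
             + (15 * th - 13) / 240 * (deriv ^^ 5) F x * h ^ 4)) \<in> O[at 0](\<lambda>h. h ^ 6)"
proof -
  define a where "a m = (deriv ^^ m) F x" for m
  define R where "R c = (\<lambda>h. F (x + c * h) - taylor_poly 6 a (c * h))" for c
  have R: "R c \<in> O[at 0](\<lambda>h. h ^ 6)" for c
    unfolding R_def a_def by (rule taylor_poly_remainder_bigo[OF assms])
  have "face_mean th (F (x - h)) (F x) (F (x + h)) (F (x + 2 * h))
      - face_mean th (F (x - 2 * h)) (F (x - h)) (F x) (F (x + h))
      - h * (deriv F x + (3 * th - 1) / 12 * (deriv ^^ 3) F x * h ^ 2
             + (15 * th - 13) / 240 * (deriv ^^ 5) F x * h ^ 4)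
    = face_mean th (R (-1) h) (R 0 h) (R 1 h) (R 2 h) - face_mean th (R (-2) h) (R (-1) h) (R 0 h) (R 1 h)"
    for h
    using face_mean_taylor_poly[of th a h] by (simp add: R_def face_mean_diff a_def)
  then show ?thesis
    by (simp only:) (intro sum_in_bigo face_mean_bigo R)
qed

lemma face_jump_bigo_cubic:
  assumes "smooth1 u"
  shows "(\<lambda>h. face_jump k (u (x + (s - 1) * h)) (u (x + s * h)) (u (x + (s + 1) * h)) (u (x + (s + 2) * h)))
    \<in> O[at 0](\<lambda>h. h ^ 3)"
proof -
  define b where "b m = (deriv ^^ m) u x" for m
  define R where "R c = (\<lambda>h. u (x + c * h) - taylor_poly 3 b (c * h))" for c
  have R: "R c \<in> O[at 0](\<lambda>h. h ^ 3)" for c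
    unfolding R_def b_def by (rule taylor_poly_remainder_bigo[OF assms])
  have "face_jump k (u (x + (s - 1) * h)) (u (x + s * h)) (u (x + (s + 1) * h)) (u (x + (s + 2) * h))
    = face_jump k (R (s - 1) h) (R s h) (R (s + 1) h) (R (s + 2) h)" for h
    using face_jump_taylor_poly_quadratic[of k b s h] by (simp add: R_def face_jump_diff)
  then show ?thesis
    by (simp only:) (intro face_jump_bigo R)
qed

lemma dissipation_difference_expansion:
  assumes "smooth1 u" "smooth1 \<psi>"
  shows "(\<lambda>h. \<psi> (x + h) * face_jump k (u (x - h)) (u x) (u (x + h)) (u (x + 2 * h))
      - \<psi> (x - h) * face_jump k (u (x - 2 * h)) (u (x - h)) (u x) (u (x + h))
      - (k - 1) / 4 * (2 * deriv \<psi> x * (deriv ^^ 3) u x + \<psi> x * (deriv ^^ 4) u x) * h ^ 4)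
    \<in> O[at 0](\<lambda>h. h ^ 6)"
proof -
  define b where "b m = (deriv ^^ m) u x" for m
  define p where "p m = (deriv ^^ m) \<psi> x" for m
  define R where "R c = (\<lambda>h. u (x + c * h) - taylor_poly 6 b (c * h))" for c
  define Q where "Q c = (\<lambda>h. \<psi> (x + c * h) - taylor_poly 3 p (c * h))" for c
  have R: "R c \<in> O[at 0](\<lambda>h. h ^ 6)" for c
    unfolding R_def b_def by (rule taylor_poly_remainder_bigo[OF assms(1)])
  have Q: "Q c \<in> O[at 0](\<lambda>h. h ^ 3)" for c
    unfolding Q_def p_def by (rule taylor_poly_remainder_bigo[OF assms(2)])
  have J: "(\<lambda>h. face_jump k (u (x - h)) (u x) (u (x + h)) (u (x + 2 * h))) \<in> O[at 0](\<lambda>h. h ^ 3)"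
    "(\<lambda>h. face_jump k (u (x - 2 * h)) (u (x - h)) (u x) (u (x + h))) \<in> O[at 0](\<lambda>h. h ^ 3)"
    using face_jump_bigo_cubic[OF assms(1), of k x 0] face_jump_bigo_cubic[OF assms(1), of k x "-1"]
    by simp_all
  have T: "(\<lambda>h. taylor_poly 3 p h) \<in> O[at 0](\<lambda>_. 1)" "(\<lambda>h. taylor_poly 3 p (- h)) \<in> O[at 0](\<lambda>_. 1)"
    using taylor_poly_bigo_1[of 3 p 1] taylor_poly_bigo_1[of 3 p "-1"] by simp_all
  have RT: "(\<lambda>h. face_jump k (R (-1) h) (R 0 h) (R 1 h) (R 2 h) * taylor_poly 3 p h) \<in> O[at 0](\<lambda>h. h ^ 6)"
    "(\<lambda>h. face_jump k (R (-2) h) (R (-1) h) (R 0 h) (R 1 h) * taylor_poly 3 p (- h)) \<in> O[at 0](\<lambda>h. h ^ 6)"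
    by (intro landau_o.big_1_mult face_jump_bigo R T)+
  have QJ: "(\<lambda>h. Q 1 h * face_jump k (u (x - h)) (u x) (u (x + h)) (u (x + 2 * h))) \<in> O[at 0](\<lambda>h. h ^ 6)"
    "(\<lambda>h. Q (-1) h * face_jump k (u (x - 2 * h)) (u (x - h)) (u x) (u (x + h))) \<in> O[at 0](\<lambda>h. h ^ 6)"
    using bigo_mult_power[OF Q J(1)] bigo_mult_power[OF Q J(2)] by simp_all
  have "\<psi> (x + h) * face_jump k (u (x - h)) (u x) (u (x + h)) (u (x + 2 * h))
      - \<psi> (x - h) * face_jump k (u (x - 2 * h)) (u (x - h)) (u x) (u (x + h))
      - (k - 1) / 4 * (2 * deriv \<psi> x * (deriv ^^ 3) u x + \<psi> x * (deriv ^^ 4) u x) * h ^ 4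
    = face_jump k (R (-1) h) (R 0 h) (R 1 h) (R 2 h) * taylor_poly 3 p h
      + Q 1 h * face_jump k (u (x - h)) (u x) (u (x + h)) (u (x + 2 * h))
      - face_jump k (R (-2) h) (R (-1) h) (R 0 h) (R 1 h) * taylor_poly 3 p (- h)
      - Q (-1) h * face_jump k (u (x - 2 * h)) (u (x - h)) (u x) (u (x + h))
      + (k - 1) / 8 * (p 2 * b 4 + p 1 * b 5) * h ^ 6" for h
    using dissipation_taylor_poly[of p h k b]
    by (simp add: R_def Q_def face_jump_diff b_def p_def algebra_simps)
  then show ?thesis
    by (simp only:) (intro sum_in_bigo RT QJ; simp)
qed

lemma trunc_err_uncorrected_expansion:
  assumes "smooth1 u" "smooth1 f" "smooth1 \<psi>"
    and "\<And>h. Dbar (u x) (u (x + h)) = \<psi> (x + h)" "\<And>h. Dbar (u (x - h)) (u x) = \<psi> (x - h)"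
  shows "(\<lambda>h. trunc_err k 0 th 0 f Dbar u x h
      - (deriv (f \<circ> u) x + (3 * th - 1) / 12 * (deriv ^^ 3) (f \<circ> u) x * h ^ 2
         - (k - 1) / 8 * (2 * deriv \<psi> x * (deriv ^^ 3) u x + \<psi> x * (deriv ^^ 4) u x) * h ^ 3
         + (15 * th - 13) / 240 * (deriv ^^ 5) (f \<circ> u) x * h ^ 4))
    \<in> O[at_right 0](\<lambda>h. h ^ 5)"
proof -
  define means where "means h =
    face_mean th (f (u (x - h))) (f (u x)) (f (u (x + h))) (f (u (x + 2 * h)))
    - face_mean th (f (u (x - 2 * h))) (f (u (x - h))) (f (u x)) (f (u (x + h)))" for h
  define jumps where "jumps h =
    \<psi> (x + h) * face_jump k (u (x - h)) (u x) (u (x + h)) (u (x + 2 * h))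
    - \<psi> (x - h) * face_jump k (u (x - 2 * h)) (u (x - h)) (u x) (u (x + h))" for h
  have flux: "(\<lambda>h. means h - h * (deriv (f \<circ> u) x + (3 * th - 1) / 12 * (deriv ^^ 3) (f \<circ> u) x * h ^ 2
      + (15 * th - 13) / 240 * (deriv ^^ 5) (f \<circ> u) x * h ^ 4)) \<in> O[at 0](\<lambda>h. h ^ 6)"
    (is "?flux \<in> _")
    using face_mean_difference_expansion[OF smooth1_compose[OF assms(2,1)], of th x]
    by (simp add: means_def)
  have dissipation: "(\<lambda>h. jumps h - (k - 1) / 4 * (2 * deriv \<psi> x * (deriv ^^ 3) u x
      + \<psi> x * (deriv ^^ 4) u x) * h ^ 4) \<in> O[at 0](\<lambda>h. h ^ 6)" (is "?dissipation \<in> _")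
    using dissipation_difference_expansion[OF assms(1,3), of x k] by (simp add: jumps_def)
  have "(\<lambda>h. ?flux h - ?dissipation h / 2) \<in> O[at 0](\<lambda>h. h ^ 6)"
    by (rule sum_in_bigo(2)[OF flux]) (use dissipation in simp)
  then have "(\<lambda>h. ?flux h - ?dissipation h / 2) \<in> O[at_right 0](\<lambda>h. h ^ 6)"
    by (rule landau_o.big.filter_mono[rotated]) (simp add: at_le)
  moreover have nonzero: "\<forall>\<^sub>F h in at_right 0. h \<noteq> (0::real)"
    by (simp add: eventually_at_filter)
  ultimately have expansion: "(\<lambda>h. (?flux h - ?dissipation h / 2) / h) \<in> O[at_right 0](\<lambda>h. h ^ 5)"
    by (intro bigo_divide_power[where n = 5, simplified])
  have trunc_err: "trunc_err k 0 th 0 f Dbar u x h = (means h - jumps h / 2) / h" if "h \<noteq> 0" for h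
    unfolding means_def jumps_def using trunc_err_uncorrected[OF that] by (simp only: assms(4,5))
  show ?thesis
    by (rule iffD2[OF landau_o.big.in_cong expansion], rule eventually_mono[OF nonzero])
      (simp add: trunc_err field_simps eval_nat_numeral)
qed

theorem mainTheorem2:
  fixes u f D :: "real \<Rightarrow> real" and Dbar :: "real \<Rightarrow> real \<Rightarrow> real"
    and k k3 th th3 x :: real
  assumes "smooth1 u" and "smooth1 f" and "smooth1 D"
    and "smooth2 Dbar" and "\<And>a b. Dbar a b = Dbar b a" and "\<And>v. Dbar v v = D v"
    and "k3 = 0" and "th3 = 0"
  shows "(\<lambda>h. trunc_err k k3 th th3 f Dbar u x h
           - ( deriv (f \<circ> u) x
             + (3 * th - 1) / 12 * (deriv ^^ 3) (f \<circ> u) x * h^2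
             - (k - 1) / 8 * (deriv (D \<circ> u) x * (deriv ^^ 3) u x
                              + D (u x) * (deriv ^^ 4) u x) * h^3
             + (15 * th - 13) / 240 * (deriv ^^ 5) (f \<circ> u) x * h^4 ))
         \<in> O[at_right 0](\<lambda>h. h^5)"
proof -
  define \<psi> where "\<psi> = Dbar (u x) \<circ> u"
  have "smooth1 \<psi>"
    unfolding \<psi>_def by (intro smooth1_compose smooth1_smooth2_slice assms(1,4))
  have face_coefficients: "Dbar (u x) (u (x + h)) = \<psi> (x + h)" "Dbar (u (x - h)) (u x) = \<psi> (x - h)" for h
    using assms(5) by (simp_all add: \<psi>_def)
  have "u field_differentiable at x"
    using smooth1_higher_deriv_differentiable[OF assms(1), of 0] by simp
  then obtain u' where "(u has_real_derivative u') (at x)"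
    unfolding field_differentiable_def by blast
  then have "deriv (D \<circ> u) x = 2 * deriv \<psi> x"
    using deriv_compose_symmetric_diagonal[OF assms(4-6)] by (simp add: \<psi>_def)
  moreover have "D (u x) = \<psi> x"
    by (simp add: \<psi>_def assms(6))
  ultimately show ?thesis
    unfolding assms(7,8)
    using trunc_err_uncorrected_expansion[OF assms(1,2) \<open>smooth1 \<psi>\<close> face_coefficients, of k th]
    by simp
qed

end
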